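(* Let $X,Y$ be finite-dimensional Banach spaces over $\mathbb{K}\in\{\mathbb{R},\mathbb{C}\}$, let $G\in L(X,Y)$ with $\|G\|=1$, and let $T\in L(X,Y)$. Then (i) $S_G(T)=\{ y^*(Tx):x\in S_X,\ y^*\in S_{Y^*},\ \|Gx\|= 1 \}$; (ii) $V_G(T)=\{y^*(Tx):x\in S_X,\ y^*\in S_{Y^*},\ y^*(Gx)= 1 \}$.
   Context: $S_X$ denotes the unit sphere of $X$ and $Y^*$ the dual of $Y$. For $T\in L(X,Y)$: $S_G(T):=\bigcap_{\delta>0}\overline{\{y^*(Tx): x\in S_X,\ y^*\in S_{Y^*},\ \|Gx\|>1-\delta\}}$ and $V_G(T):=\bigcap_{\delta>0}\overline{\{y^*(Tx): x\in S_X,\ y^*\in S_{Y^*},\ \operatorname{Re} y^*(Gx)>1-\delta\}}$ (the numerical range of $T$ with respect to $G$). *)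

theory Defs
  imports "HOL-Analysis.Analysis"
begin

text \<open>A finite-dimensional normed space over the scalar field 'k (real or complex)
is modelled, up to isometric isomorphism, as the coordinate space 'k^'n equipped with
an arbitrary norm N (not necessarily the Euclidean one).\<close>

definition is_norm_on :: "('k::real_normed_field ^ 'n \<Rightarrow> real) \<Rightarrow> bool" where
  "is_norm_on N \<longleftrightarrow>
     (\<forall>x. N x = 0 \<longleftrightarrow> x = 0) \<and>
     (\<forall>c x. N (c *s x) = norm c * N x) \<and>
     (\<forall>x y. N (x + y) \<le> N x + N y)"

definition klinear :: "('k::real_normed_field ^ 'n \<Rightarrow> 'k ^ 'm) \<Rightarrow> bool" where
  "klinear f \<longleftrightarrow> Vector_Spaces.linear (\<lambda>c v. c *s v) (\<lambda>c v. c *s v) f"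

definition op_norm :: "('k::real_normed_field ^ 'n \<Rightarrow> real) \<Rightarrow> ('k ^ 'm \<Rightarrow> real)
    \<Rightarrow> ('k ^ 'n \<Rightarrow> 'k ^ 'm) \<Rightarrow> real" where
  "op_norm NX NY f = (SUP x \<in> {x. NX x = 1}. NY (f x))"

definition unit_sphere :: "('k::real_normed_field ^ 'n \<Rightarrow> real) \<Rightarrow> ('k ^ 'n) set" where
  "unit_sphere N = {x. N x = 1}"

definition dual_sphere :: "('k::real_normed_field ^ 'm \<Rightarrow> real) \<Rightarrow> ('k ^ 'm \<Rightarrow> 'k) set" where
  "dual_sphere NY = {\<phi>. Vector_Spaces.linear (\<lambda>c v. c *s v) (\<lambda>a b. a * b) \<phi> \<and>
                        (SUP y \<in> {y. NY y = 1}. norm (\<phi> y)) = 1}"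

definition S_G :: "('k::real_normed_field ^ 'n \<Rightarrow> real) \<Rightarrow> ('k ^ 'm \<Rightarrow> real)
    \<Rightarrow> ('k ^ 'n \<Rightarrow> 'k ^ 'm) \<Rightarrow> ('k ^ 'n \<Rightarrow> 'k ^ 'm) \<Rightarrow> 'k set" where
  "S_G NX NY G T = (\<Inter>\<delta>\<in>{0<..}. closure
     {\<phi> (T x) | x \<phi>. x \<in> unit_sphere NX \<and> \<phi> \<in> dual_sphere NY \<and> NY (G x) > 1 - \<delta>})"

text \<open>V_G(T); the parameter re is the real-part map of the scalar field
(the identity for 'k = real, Re for 'k = complex).\<close>
definition V_G :: "('k::real_normed_field \<Rightarrow> real) \<Rightarrow> ('k ^ 'n \<Rightarrow> real) \<Rightarrow> ('k ^ 'm \<Rightarrow> real)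
    \<Rightarrow> ('k ^ 'n \<Rightarrow> 'k ^ 'm) \<Rightarrow> ('k ^ 'n \<Rightarrow> 'k ^ 'm) \<Rightarrow> 'k set" where
  "V_G re NX NY G T = (\<Inter>\<delta>\<in>{0<..}. closure
     {\<phi> (T x) | x \<phi>. x \<in> unit_sphere NX \<and> \<phi> \<in> dual_sphere NY \<and> re (\<phi> (G x)) > 1 - \<delta>})"

end

theory Submission
  imports Defs
begin

(* Every linear functional is y \<mapsto> \<Sum>i. y_i w_i, and the coefficient vectors w of dual norm 1
   form the unit sphere of the dual norm, so the pairs (x, w) behind both sets range over a
   compact set K. Each of S_G(T) and V_G(T) is then \<Inter>\<delta>>0. closure g({p \<in> K. 1 - \<delta> < f p})
   for continuous g and f, and compactness shows this is g({p \<in> K. 1 \<le> f p}): the images of the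
   compact superlevel sets are closed, and on the compact fibre of g over a point of the
   intersection f attains a maximum, which must be at least 1. Finally ||G|| = 1 and ||y*|| = 1
   give f \<le> 1 on K, and Re z \<ge> 1 together with |z| \<le> 1 forces z = 1. *)

lemma scaleR_eq_of_real_scale_vec: "r *\<^sub>R (x::'k::real_normed_field^'n) = (of_real r :: 'k) *s x"
  by (simp add: vec_eq_iff) (simp add: scaleR_conv_of_real)

lemma klinear_continuous_on:
  fixes f :: "'k::{real_normed_field,euclidean_space}^'n \<Rightarrow> 'k^'m"
  assumes "klinear f"
  shows "continuous_on S f"
proof -
  interpret Vector_Spaces.linear "\<lambda>c v. c *s v" "\<lambda>c v. c *s v" f
    using assms by (simp add: klinear_def)
  have "linear f"
    by (intro linearI) (simp_all add: add scale scaleR_eq_of_real_scale_vec)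
  then show ?thesis
    by (simp add: linear_continuous_on linear_conv_bounded_linear)
qed

context
  fixes N :: "'k::{real_normed_field,euclidean_space}^'n \<Rightarrow> real"
  assumes N: "is_norm_on N"
begin

lemma norm_on_eq_0_iff: "N x = 0 \<longleftrightarrow> x = 0"
  and norm_on_scale: "N (c *s x) = norm c * N x"
  and norm_on_triangle: "N (x + y) \<le> N x + N y"
  using N by (simp_all add: is_norm_on_def)

lemma norm_on_scaleR: "N (r *\<^sub>R x) = \<bar>r\<bar> * N x"
  by (simp add: scaleR_eq_of_real_scale_vec norm_on_scale)

lemma norm_on_nonneg: "0 \<le> N x"
  using norm_on_triangle[of x "-x"] norm_on_scaleR[of "-1" x] norm_on_eq_0_iff[of 0] by simp

lemma continuous_on_norm_on: "continuous_on S N"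
proof -
  have "convex_on UNIV N"
  proof
    fix t :: real and x y assume "0 < t" "t < 1"
    then show "N ((1 - t) *\<^sub>R x + t *\<^sub>R y) \<le> (1 - t) * N x + t * N y"
      using norm_on_triangle[of "(1 - t) *\<^sub>R x" "t *\<^sub>R y"] by (simp add: norm_on_scaleR)
  qed simp
  then show ?thesis
    using convex_on_continuous continuous_on_subset by blast
qed

lemma norm_on_lower_bound: obtains c where "c > 0" "\<And>x. c * norm x \<le> N x"
proof -
  obtain y where y: "y \<in> sphere 0 1" and ymin: "\<And>z. z \<in> sphere 0 1 \<Longrightarrow> N y \<le> N z"
    using continuous_attains_inf[OF compact_sphere[of "0::'k^'n" 1] _ continuous_on_norm_on]
    by auto
  have "N y > 0"
    using y norm_on_eq_0_iff[of y] norm_on_nonneg[of y] by auto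
  moreover have "N y * norm x \<le> N x" for x
  proof (cases "x = 0")
    case False
    then have "N y \<le> N (inverse (norm x) *\<^sub>R x)" by (intro ymin) simp
    then show ?thesis using False by (simp add: norm_on_scaleR field_simps)
  qed (simp add: norm_on_nonneg)
  ultimately show ?thesis using that by blast
qed

lemma compact_norm_on_sphere: "compact {x. N x = 1}"
proof -
  obtain c where c: "c > 0" "\<And>x. c * norm x \<le> N x" using norm_on_lower_bound by blast
  have "norm x \<le> 1 / c" if "N x = 1" for x
    using c(1) c(2)[of x] that by (simp add: field_simps)
  then have "{x. N x = 1} \<subseteq> cball 0 (1 / c)" by auto
  moreover have "closed {x. N x = 1}"
    by (intro closed_Collect_eq continuous_on_norm_on continuous_on_const)
  ultimately show ?thesis
    by (meson bounded_cball bounded_subset compact_eq_bounded_closed)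
qed

lemma norm_on_sphere_nonempty: "{x. N x = 1} \<noteq> {}"
proof -
  have "N (1::'k^'n) > 0"
    using norm_on_eq_0_iff norm_on_nonneg by (metis less_eq_real_def one_neq_zero)
  then have "N (inverse (N 1) *\<^sub>R (1::'k^'n)) = 1" by (simp add: norm_on_scaleR)
  then show ?thesis by blast
qed

end

definition lin_functional :: "'k::field^'n \<Rightarrow> 'k^'n \<Rightarrow> 'k" where
  "lin_functional w y = (\<Sum>i\<in>UNIV. y $ i * w $ i)"

lemma linear_lin_functional:
  "Vector_Spaces.linear (\<lambda>c v. c *s v) (\<lambda>a b. a * b) (lin_functional w)"
  unfolding Vector_Spaces.linear_iff
  by (auto simp: lin_functional_def vec.vector_space_axioms
      vector_space_over_itself.vector_space_axioms sum.distrib sum_distrib_left algebra_simps)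

lemma lin_functional_axis: "lin_functional w (axis i 1) = w $ i"
  by (simp add: lin_functional_def axis_def if_distrib[of "\<lambda>c. c * _"] cong: if_cong)

lemma lin_functional_scale_left: "lin_functional (c *s w) y = c * lin_functional w y"
  and lin_functional_scale_right: "lin_functional w (c *s y) = c * lin_functional w y"
  and lin_functional_add_left: "lin_functional (w + w') y = lin_functional w y + lin_functional w' y"
  by (simp_all add: lin_functional_def sum_distrib_left sum.distrib algebra_simps)

lemma linear_functional_eq_lin_functional:
  fixes \<phi> :: "'k::field^'n \<Rightarrow> 'k"
  assumes "Vector_Spaces.linear (\<lambda>c v. c *s v) (\<lambda>a b. a * b) \<phi>"
  shows "\<phi> = lin_functional (\<chi> i. \<phi> (axis i 1))"
proof
  interpret Vector_Spaces.linear "\<lambda>c v. c *s v" "\<lambda>a b. a * b" \<phi> by fact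
  fix y
  show "\<phi> y = lin_functional (\<chi> i. \<phi> (axis i 1)) y"
    by (subst basis_expansion[symmetric, of y]) (simp add: sum scale lin_functional_def)
qed

lemma continuous_on_lin_functional [continuous_intros]:
  fixes f g :: "'a::topological_space \<Rightarrow> 'k::real_normed_field^'n"
  assumes "continuous_on S f" "continuous_on S g"
  shows "continuous_on S (\<lambda>x. lin_functional (f x) (g x))"
  unfolding lin_functional_def
  by (intro continuous_intros continuous_on_component assms)

definition dual_norm :: "('k::real_normed_field^'n \<Rightarrow> real) \<Rightarrow> 'k^'n \<Rightarrow> real" where
  "dual_norm N w = (SUP y \<in> {y. N y = 1}. norm (lin_functional w y))"

context
  fixes N :: "'k::{real_normed_field,euclidean_space}^'n \<Rightarrow> real"
  assumes N: "is_norm_on N"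
begin

lemma dual_norm_upper: "N y = 1 \<Longrightarrow> norm (lin_functional w y) \<le> dual_norm N w"
  unfolding dual_norm_def
  by (intro cSUP_upper bounded_imp_bdd_above compact_imp_bounded compact_continuous_image
      compact_norm_on_sphere[OF N] continuous_intros) auto

lemma dual_norm_least:
  "(\<And>y. N y = 1 \<Longrightarrow> norm (lin_functional w y) \<le> M) \<Longrightarrow> dual_norm N w \<le> M"
  unfolding dual_norm_def using norm_on_sphere_nonempty[OF N] by (intro cSUP_least) auto

lemma dual_norm_nonneg: "0 \<le> dual_norm N w"
  using norm_on_sphere_nonempty[OF N] dual_norm_upper norm_ge_zero order_trans by blast

lemma norm_lin_functional_le: "norm (lin_functional w y) \<le> dual_norm N w * N y"
proof (cases "y = 0")
  case True
  then show ?thesis by (simp add: lin_functional_def norm_on_nonneg[OF N] dual_norm_nonneg)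
next
  case False
  then have pos: "N y > 0"
    using norm_on_eq_0_iff[OF N] norm_on_nonneg[OF N] by (metis less_eq_real_def)
  have "norm (lin_functional w (inverse (N y) *\<^sub>R y)) \<le> dual_norm N w"
    using pos by (intro dual_norm_upper) (simp add: norm_on_scaleR[OF N])
  with pos show ?thesis
    by (simp add: scaleR_eq_of_real_scale_vec lin_functional_scale_right norm_divide field_simps)
qed

lemma is_norm_on_dual_norm: "is_norm_on (dual_norm N)"
  unfolding is_norm_on_def
proof (intro conjI allI)
  fix w
  show "dual_norm N w = 0 \<longleftrightarrow> w = 0"
  proof
    assume "dual_norm N w = 0"
    then have "norm (w $ i) \<le> 0" for i
      using norm_lin_functional_le[of w "axis i 1"] by (simp add: lin_functional_axis)
    then show "w = 0" by (simp add: vec_eq_iff)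
  qed (simp add: order_antisym dual_norm_least dual_norm_nonneg lin_functional_def)
next
  fix c and w :: "'k^'n"
  show "dual_norm N (c *s w) = norm c * dual_norm N w"
  proof (cases "c = 0")
    case True
    then show ?thesis
      by (simp add: order_antisym dual_norm_least dual_norm_nonneg lin_functional_def)
  next
    case False
    have "dual_norm N (c *s w) \<le> norm c * dual_norm N w"
      by (intro dual_norm_least)
        (simp add: lin_functional_scale_left norm_mult mult_left_mono dual_norm_upper)
    moreover have "norm c * dual_norm N w \<le> dual_norm N (c *s w)"
    proof -
      have "norm (lin_functional w y) \<le> dual_norm N (c *s w) / norm c" if "N y = 1" for y
        using dual_norm_upper[OF that, of "c *s w"] False
        by (simp add: lin_functional_scale_left norm_mult field_simps)
      then have "dual_norm N w \<le> dual_norm N (c *s w) / norm c"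
        by (rule dual_norm_least)
      then show ?thesis
        using False by (simp add: field_simps)
    qed
    ultimately show ?thesis by simp
  qed
next
  fix w w' :: "'k^'n"
  show "dual_norm N (w + w') \<le> dual_norm N w + dual_norm N w'"
    by (intro dual_norm_least)
      (simp add: lin_functional_add_left norm_triangle_le add_mono dual_norm_upper)
qed

lemma dual_sphere_eq_image: "dual_sphere N = lin_functional ` {w. dual_norm N w = 1}"
proof safe
  fix \<phi> assume "\<phi> \<in> dual_sphere N"
  then have "Vector_Spaces.linear (\<lambda>c v. c *s v) (\<lambda>a b. a * b) \<phi>"
    and "(SUP y \<in> {y. N y = 1}. norm (\<phi> y)) = 1"
    by (simp_all add: dual_sphere_def)
  then show "\<phi> \<in> lin_functional ` {w. dual_norm N w = 1}"
    using linear_functional_eq_lin_functional unfolding dual_norm_def by (intro image_eqI) auto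
qed (simp add: dual_sphere_def dual_norm_def linear_lin_functional)

end

lemma compact_Int_vimage_closed:
  fixes f :: "'a::t2_space \<Rightarrow> 'b::topological_space"
  assumes "compact K" "continuous_on K f" "closed T"
  shows "compact (K \<inter> f -` T)"
  using compact_Int_closed[OF assms(1) continuous_closed_preimage[OF assms(2) _ assms(3)]]
  by (simp add: Int_absorb1 compact_imp_closed[OF assms(1)] flip: Int_assoc)

lemma Inter_closure_superlevel_image:
  fixes f :: "'a::t2_space \<Rightarrow> real" and g :: "'a \<Rightarrow> 'b::t2_space"
  assumes K: "compact K" and f: "continuous_on K f" and g: "continuous_on K g"
  shows "(\<Inter>\<delta>\<in>{0<..}. closure (g ` {p \<in> K. c - \<delta> < f p})) = g ` {p \<in> K. c \<le> f p}"
proof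
  show "g ` {p \<in> K. c \<le> f p} \<subseteq> (\<Inter>\<delta>\<in>{0<..}. closure (g ` {p \<in> K. c - \<delta> < f p}))"
    by (auto intro!: closure_subset[THEN subsetD] imageI)
next
  have compact_superlevel: "compact {p \<in> K. a \<le> f p}" for a
    using compact_Int_vimage_closed[OF K f closed_atLeast, of a] by (simp add: Int_def)
  show "(\<Inter>\<delta>\<in>{0<..}. closure (g ` {p \<in> K. c - \<delta> < f p})) \<subseteq> g ` {p \<in> K. c \<le> f p}"
  proof
    fix z assume z: "z \<in> (\<Inter>\<delta>\<in>{0<..}. closure (g ` {p \<in> K. c - \<delta> < f p}))"
    have near: "z \<in> g ` {p \<in> K. c - \<delta> \<le> f p}" if "\<delta> > 0" for \<delta>
    proof -
      have "closed (g ` {p \<in> K. c - \<delta> \<le> f p})"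
        by (intro compact_imp_closed compact_continuous_image compact_superlevel
            continuous_on_subset[OF g]) auto
      then have "closure (g ` {p \<in> K. c - \<delta> < f p}) \<subseteq> g ` {p \<in> K. c - \<delta> \<le> f p}"
        by (intro closure_minimal) auto
      with z that show ?thesis by blast
    qed
    define F where "F = K \<inter> g -` {z}"
    have "compact F" unfolding F_def by (intro compact_Int_vimage_closed K g closed_singleton)
    moreover have "F \<noteq> {}" using near[of 1] by (auto simp: F_def)
    ultimately obtain p where p: "p \<in> F" and pmax: "\<And>q. q \<in> F \<Longrightarrow> f q \<le> f p"
      using continuous_attains_sup[OF _ _ continuous_on_subset[OF f]] by (metis F_def Int_lower1)
    have "c \<le> f p"
    proof (rule field_le_epsilon)
      fix \<delta> :: real assume "0 < \<delta>"
      then obtain q where "q \<in> F" "c - \<delta> \<le> f q" using near by (auto simp: F_def)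
      then show "c \<le> f p + \<delta>" using pmax by fastforce
    qed
    then show "z \<in> g ` {p \<in> K. c \<le> f p}" using p by (auto simp: F_def)
  qed
qed

lemma norm_on_le_op_norm:
  fixes NX :: "'k::{real_normed_field,euclidean_space}^'n \<Rightarrow> real" and NY :: "'k^'m \<Rightarrow> real"
  assumes NX: "is_norm_on NX" and NY: "is_norm_on NY" and G: "klinear G" and x: "NX x = 1"
  shows "NY (G x) \<le> op_norm NX NY G"
  unfolding op_norm_def using x
  by (intro cSUP_upper bounded_imp_bdd_above compact_imp_bounded compact_continuous_image
      compact_norm_on_sphere[OF NX] continuous_on_compose2[OF continuous_on_norm_on[OF NY]
        klinear_continuous_on[OF G]]) auto

context
  fixes NX :: "'k::{real_normed_field,euclidean_space}^'n \<Rightarrow> real"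
    and NY :: "'k^'m \<Rightarrow> real"
  assumes NX: "is_norm_on NX" and NY: "is_norm_on NY"
begin

lemma compact_unit_sphere_Times_dual_norm_sphere:
  "compact (unit_sphere NX \<times> {w. dual_norm NY w = 1})"
  unfolding unit_sphere_def
  by (intro compact_Times compact_norm_on_sphere NX is_norm_on_dual_norm NY)

lemma image_unit_sphere_dual_sphere:
  "{\<phi> (T x) | x \<phi>. x \<in> unit_sphere NX \<and> \<phi> \<in> dual_sphere NY \<and> P x \<phi>} =
    (\<lambda>p. lin_functional (snd p) (T (fst p))) `
      {p \<in> unit_sphere NX \<times> {w. dual_norm NY w = 1}. P (fst p) (lin_functional (snd p))}"
  unfolding dual_sphere_eq_image[OF NY] by force

lemma S_G_eq_attained:
  assumes G: "klinear G" and T: "klinear T" and G_norm: "op_norm NX NY G = 1"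
  shows "S_G NX NY G T = {\<phi> (T x) | x \<phi>. x \<in> unit_sphere NX \<and> \<phi> \<in> dual_sphere NY \<and> NY (G x) = 1}"
proof -
  let ?K = "unit_sphere NX \<times> {w. dual_norm NY w = 1}"
  have "S_G NX NY G T =
      (\<Inter>\<delta>\<in>{0<..}. closure ((\<lambda>p. lin_functional (snd p) (T (fst p))) `
        {p \<in> ?K. 1 - \<delta> < NY (G (fst p))}))"
    by (simp add: S_G_def image_unit_sphere_dual_sphere)
  also have "\<dots> = (\<lambda>p. lin_functional (snd p) (T (fst p))) ` {p \<in> ?K. 1 \<le> NY (G (fst p))}"
    by (intro Inter_closure_superlevel_image compact_unit_sphere_Times_dual_norm_sphere
        continuous_on_compose2[OF continuous_on_norm_on[OF NY] _ subset_UNIV]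
        continuous_on_compose2[OF klinear_continuous_on[OF G] _ subset_UNIV]
        continuous_on_compose2[OF klinear_continuous_on[OF T] _ subset_UNIV] continuous_intros)
  also have "{p \<in> ?K. 1 \<le> NY (G (fst p))} = {p \<in> ?K. NY (G (fst p)) = 1}"
    using norm_on_le_op_norm[OF NX NY G] G_norm by (force simp: unit_sphere_def)
  finally show ?thesis by (simp add: image_unit_sphere_dual_sphere)
qed

lemma V_G_eq_attained:
  assumes G: "klinear G" and T: "klinear T" and G_norm: "op_norm NX NY G = 1"
    and re: "continuous_on UNIV re" "re 1 = 1" "\<And>z. norm z \<le> 1 \<Longrightarrow> 1 \<le> re z \<Longrightarrow> z = 1"
  shows "V_G re NX NY G T = {\<phi> (T x) | x \<phi>. x \<in> unit_sphere NX \<and> \<phi> \<in> dual_sphere NY \<and> \<phi> (G x) = 1}"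
proof -
  let ?K = "unit_sphere NX \<times> {w. dual_norm NY w = 1}"
  have "V_G re NX NY G T =
      (\<Inter>\<delta>\<in>{0<..}. closure ((\<lambda>p. lin_functional (snd p) (T (fst p))) `
        {p \<in> ?K. 1 - \<delta> < re (lin_functional (snd p) (G (fst p)))}))"
    by (simp add: V_G_def image_unit_sphere_dual_sphere)
  also have "\<dots> = (\<lambda>p. lin_functional (snd p) (T (fst p))) `
      {p \<in> ?K. 1 \<le> re (lin_functional (snd p) (G (fst p)))}"
    by (intro Inter_closure_superlevel_image compact_unit_sphere_Times_dual_norm_sphere
        continuous_on_compose2[OF re(1) _ subset_UNIV]
        continuous_on_compose2[OF klinear_continuous_on[OF G] _ subset_UNIV]
        continuous_on_compose2[OF klinear_continuous_on[OF T] _ subset_UNIV] continuous_intros)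
  also have "{p \<in> ?K. 1 \<le> re (lin_functional (snd p) (G (fst p)))} =
      {p \<in> ?K. lin_functional (snd p) (G (fst p)) = 1}"
  proof -
    have "norm (lin_functional w (G x)) \<le> 1" if "NX x = 1" "dual_norm NY w = 1" for x w
      using norm_lin_functional_le[OF NY, of w "G x"] norm_on_le_op_norm[OF NX NY G]
        G_norm that by (metis mult_1 order_trans)
    then show ?thesis using re(2,3) by (force simp: unit_sphere_def)
  qed
  finally show ?thesis by (simp add: image_unit_sphere_dual_sphere)
qed

end

lemma complex_eq_1_if_Re_ge_1:
  fixes z :: complex
  assumes "cmod z \<le> 1" "1 \<le> Re z"
  shows "z = 1"
proof -
  have "Re z = 1" using abs_Re_le_cmod[of z] assms by linarith
  moreover have "cmod z ^ 2 \<le> 1" using assms(1) by (simp add: power_le_one)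
  ultimately have "Im z = 0" using cmod_power2[of z] by simp
  with \<open>Re z = 1\<close> show ?thesis by (simp add: complex_eq_iff)
qed

theorem proposition2p4:
  shows
  "(\<forall>(NX :: real ^ 'n \<Rightarrow> real) (NY :: real ^ 'm \<Rightarrow> real) G T.
      is_norm_on NX \<and> is_norm_on NY \<and> klinear G \<and> klinear T \<and> op_norm NX NY G = 1 \<longrightarrow>
      S_G NX NY G T = {\<phi> (T x) | x \<phi>. x \<in> unit_sphere NX \<and> \<phi> \<in> dual_sphere NY \<and> NY (G x) = 1} \<and>
      V_G (\<lambda>r. r) NX NY G T = {\<phi> (T x) | x \<phi>. x \<in> unit_sphere NX \<and> \<phi> \<in> dual_sphere NY \<and> \<phi> (G x) = 1})
   \<and>
   (\<forall>(NX :: complex ^ 'n \<Rightarrow> real) (NY :: complex ^ 'm \<Rightarrow> real) G T.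
      is_norm_on NX \<and> is_norm_on NY \<and> klinear G \<and> klinear T \<and> op_norm NX NY G = 1 \<longrightarrow>
      S_G NX NY G T = {\<phi> (T x) | x \<phi>. x \<in> unit_sphere NX \<and> \<phi> \<in> dual_sphere NY \<and> NY (G x) = 1} \<and>
      V_G Re NX NY G T = {\<phi> (T x) | x \<phi>. x \<in> unit_sphere NX \<and> \<phi> \<in> dual_sphere NY \<and> \<phi> (G x) = 1})"
proof (intro conjI allI impI; elim conjE)
  fix NX :: "real^'n \<Rightarrow> real" and NY :: "real^'m \<Rightarrow> real" and G T :: "real^'n \<Rightarrow> real^'m"
  assume hyps: "is_norm_on NX" "is_norm_on NY" "klinear G" "klinear T" "op_norm NX NY G = 1"
  then show "S_G NX NY G T = {\<phi> (T x) | x \<phi>. x \<in> unit_sphere NX \<and> \<phi> \<in> dual_sphere NY \<and> NY (G x) = 1}"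
    by (simp add: S_G_eq_attained)
  show "V_G (\<lambda>r. r) NX NY G T = {\<phi> (T x) | x \<phi>. x \<in> unit_sphere NX \<and> \<phi> \<in> dual_sphere NY \<and> \<phi> (G x) = 1}"
    by (rule V_G_eq_attained) (simp_all add: hyps)
next
  fix NX :: "complex^'n \<Rightarrow> real" and NY :: "complex^'m \<Rightarrow> real"
    and G T :: "complex^'n \<Rightarrow> complex^'m"
  assume "is_norm_on NX" "is_norm_on NY" "klinear G" "klinear T" "op_norm NX NY G = 1"
  then show "S_G NX NY G T = {\<phi> (T x) | x \<phi>. x \<in> unit_sphere NX \<and> \<phi> \<in> dual_sphere NY \<and> NY (G x) = 1}"
    and "V_G Re NX NY G T = {\<phi> (T x) | x \<phi>. x \<in> unit_sphere NX \<and> \<phi> \<in> dual_sphere NY \<and> \<phi> (G x) = 1}"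
    by (simp_all add: S_G_eq_attained V_G_eq_attained continuous_on_Re complex_eq_1_if_Re_ge_1)
qed

end
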